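(* Let $X$ be a locally compact Hausdorff space, let $\mathcal H = \{H_x\}_{x \in X}$ be a continuous field of Hilbert spaces over $X$, and let $\mathcal M = C_0(X, \mathcal H)$ be the Hilbert $C_0(X)$-module of its continuous sections vanishing at infinity. Let $\mathcal N \subset \mathcal M$ be a closed submodule and for $x \in X$ let $L_x = \overline{\{ n(x) \mid n \in \mathcal N\}} \subset H_x$. Then $\mathcal N$ is an essential submodule of $\mathcal M$ if and only if for every $m \in \mathcal M$ the set $Y_m = \{ x \in X \mid m(x) \notin L_x \}$ is nowhere dense in $X$.
   Context: $\mathcal M$ carries the $C_0(X)$-valued inner product $\langle m, m'\rangle(x) = \langle m(x), m'(x)\rangle_{H_x}$ and the right action $(ma)(x) = m(x)a(x)$. A closed submodule $\mathcal N \subset \mathcal M$ is essential if for every nonzero (not necessarily closed) submodule $\mathcal K \subset \mathcal M$ (a linear subspace with $\mathcal K\, C_0(X) \subset \mathcal K$) one has $\mathcal N \cap \mathcal K \neq \{0\}$. *)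

theory Defs
  imports "HOL-Analysis.Analysis"
begin

text \<open>Fibres of the field are modelled as complex linear subspaces of the common
ambient complex vector space of all functions 'i => complex (every complex vector
space embeds in such a space for a large enough index type), each equipped with its
own inner product.\<close>

type_synonym 'i vec = "'i \<Rightarrow> complex"

definition vzero :: "'i vec" where "vzero = (\<lambda>i. 0)"
definition vadd :: "'i vec \<Rightarrow> 'i vec \<Rightarrow> 'i vec" where "vadd u v = (\<lambda>i. u i + v i)"
definition vsub :: "'i vec \<Rightarrow> 'i vec \<Rightarrow> 'i vec" where "vsub u v = (\<lambda>i. u i - v i)"
definition vsmul :: "complex \<Rightarrow> 'i vec \<Rightarrow> 'i vec" where "vsmul c v = (\<lambda>i. c * v i)"

definition hnorm :: "('i vec \<Rightarrow> 'i vec \<Rightarrow> complex) \<Rightarrow> 'i vec \<Rightarrow> real" where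
  "hnorm ip v = sqrt (Re (ip v v))"

definition complex_hilbert_space :: "'i vec set \<Rightarrow> ('i vec \<Rightarrow> 'i vec \<Rightarrow> complex) \<Rightarrow> bool" where
  "complex_hilbert_space V ip \<longleftrightarrow>
     vzero \<in> V \<and> (\<forall>u\<in>V. \<forall>v\<in>V. vadd u v \<in> V) \<and> (\<forall>c. \<forall>v\<in>V. vsmul c v \<in> V) \<and>
     (\<forall>u\<in>V. \<forall>v\<in>V. \<forall>w\<in>V. ip (vadd u v) w = ip u w + ip v w) \<and>
     (\<forall>c. \<forall>u\<in>V. \<forall>w\<in>V. ip (vsmul c u) w = c * ip u w) \<and>
     (\<forall>u\<in>V. \<forall>v\<in>V. ip v u = cnj (ip u v)) \<and>
     (\<forall>u\<in>V. 0 \<le> Re (ip u u)) \<and>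
     (\<forall>u\<in>V. ip u u = 0 \<longrightarrow> u = vzero) \<and>
     (\<forall>s::nat \<Rightarrow> 'i vec. (\<forall>n. s n \<in> V) \<and>
        (\<forall>e>0. \<exists>N. \<forall>m\<ge>N. \<forall>n\<ge>N. hnorm ip (vsub (s m) (s n)) < e) \<longrightarrow>
        (\<exists>v\<in>V. \<forall>e>0. \<exists>N. \<forall>n\<ge>N. hnorm ip (vsub (s n) v) < e))"

definition is_section :: "'x topology \<Rightarrow> ('x \<Rightarrow> 'i vec set) \<Rightarrow> ('x \<Rightarrow> 'i vec) \<Rightarrow> bool" where
  "is_section X H s \<longleftrightarrow> (\<forall>x. (x \<in> topspace X \<longrightarrow> s x \<in> H x) \<and> (x \<notin> topspace X \<longrightarrow> s x = vzero))"

definition zero_section :: "'x \<Rightarrow> 'i vec" where "zero_section = (\<lambda>x. vzero)"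

text \<open>Continuous field of Hilbert spaces (Dixmier, C*-algebras 10.1.2):
fibres H x with inner products ip x and a space Gamma of "continuous" sections.\<close>
definition continuous_field ::
  "'x topology \<Rightarrow> ('x \<Rightarrow> 'i vec set) \<Rightarrow> ('x \<Rightarrow> 'i vec \<Rightarrow> 'i vec \<Rightarrow> complex) \<Rightarrow> ('x \<Rightarrow> 'i vec) set \<Rightarrow> bool" where
  "continuous_field X H ip \<Gamma> \<longleftrightarrow>
     (\<forall>x\<in>topspace X. complex_hilbert_space (H x) (ip x)) \<and>
     (\<forall>s\<in>\<Gamma>. is_section X H s) \<and>
     zero_section \<in> \<Gamma> \<and>
     (\<forall>s\<in>\<Gamma>. \<forall>t\<in>\<Gamma>. (\<lambda>x. vadd (s x) (t x)) \<in> \<Gamma>) \<and>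
     (\<forall>c. \<forall>s\<in>\<Gamma>. (\<lambda>x. vsmul c (s x)) \<in> \<Gamma>) \<and>
     (\<forall>x\<in>topspace X. \<forall>v\<in>H x. \<forall>e>0. \<exists>s\<in>\<Gamma>. hnorm (ip x) (vsub v (s x)) < e) \<and>
     (\<forall>s\<in>\<Gamma>. continuous_map X euclideanreal (\<lambda>x. hnorm (ip x) (s x))) \<and>
     (\<forall>t. is_section X H t \<and>
          (\<forall>x\<in>topspace X. \<forall>e>0. \<exists>s\<in>\<Gamma>. \<exists>U. openin X U \<and> x \<in> U \<and>
               (\<forall>y\<in>U. hnorm (ip y) (vsub (t y) (s y)) \<le> e))
          \<longrightarrow> t \<in> \<Gamma>)"

definition C0_sections ::
  "'x topology \<Rightarrow> ('x \<Rightarrow> 'i vec set) \<Rightarrow> ('x \<Rightarrow> 'i vec \<Rightarrow> 'i vec \<Rightarrow> complex) \<Rightarrow> ('x \<Rightarrow> 'i vec) set \<Rightarrow> ('x \<Rightarrow> 'i vec) set" where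
  "C0_sections X H ip \<Gamma> =
     {s\<in>\<Gamma>. \<forall>e>0. compactin X {x\<in>topspace X. e \<le> hnorm (ip x) (s x)}}"

definition C0_functions :: "'x topology \<Rightarrow> ('x \<Rightarrow> complex) set" where
  "C0_functions X = {a. continuous_map X euclidean a \<and>
      (\<forall>e>0. compactin X {x\<in>topspace X. e \<le> norm (a x)})}"

definition ract :: "('x \<Rightarrow> 'i vec) \<Rightarrow> ('x \<Rightarrow> complex) \<Rightarrow> ('x \<Rightarrow> 'i vec)" where
  "ract m a = (\<lambda>x. vsmul (a x) (m x))"

definition submodule ::
  "'x topology \<Rightarrow> ('x \<Rightarrow> 'i vec set) \<Rightarrow> ('x \<Rightarrow> 'i vec \<Rightarrow> 'i vec \<Rightarrow> complex) \<Rightarrow> ('x \<Rightarrow> 'i vec) set \<Rightarrow> ('x \<Rightarrow> 'i vec) set \<Rightarrow> bool" where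
  "submodule X H ip \<Gamma> K \<longleftrightarrow>
     K \<subseteq> C0_sections X H ip \<Gamma> \<and> zero_section \<in> K \<and>
     (\<forall>s\<in>K. \<forall>t\<in>K. (\<lambda>x. vadd (s x) (t x)) \<in> K) \<and>
     (\<forall>c. \<forall>s\<in>K. (\<lambda>x. vsmul c (s x)) \<in> K) \<and>
     (\<forall>s\<in>K. \<forall>a\<in>C0_functions X. ract s a \<in> K)"

text \<open>Closed in the norm of the Hilbert module, i.e. the sup norm
||m|| = sup_x ||m(x)||.\<close>
definition closed_submodule ::
  "'x topology \<Rightarrow> ('x \<Rightarrow> 'i vec set) \<Rightarrow> ('x \<Rightarrow> 'i vec \<Rightarrow> 'i vec \<Rightarrow> complex) \<Rightarrow> ('x \<Rightarrow> 'i vec) set \<Rightarrow> ('x \<Rightarrow> 'i vec) set \<Rightarrow> bool" where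
  "closed_submodule X H ip \<Gamma> N \<longleftrightarrow> submodule X H ip \<Gamma> N \<and>
     (\<forall>(f::nat \<Rightarrow> 'x \<Rightarrow> 'i vec) m. (\<forall>n. f n \<in> N) \<and> m \<in> C0_sections X H ip \<Gamma> \<and>
        (\<forall>e>0. \<exists>k. \<forall>n\<ge>k. \<forall>x\<in>topspace X. hnorm (ip x) (vsub (f n x) (m x)) \<le> e)
        \<longrightarrow> m \<in> N)"

definition essential_submodule ::
  "'x topology \<Rightarrow> ('x \<Rightarrow> 'i vec set) \<Rightarrow> ('x \<Rightarrow> 'i vec \<Rightarrow> 'i vec \<Rightarrow> complex) \<Rightarrow> ('x \<Rightarrow> 'i vec) set \<Rightarrow> ('x \<Rightarrow> 'i vec) set \<Rightarrow> bool" where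
  "essential_submodule X H ip \<Gamma> N \<longleftrightarrow>
     (\<forall>K. submodule X H ip \<Gamma> K \<and> K \<noteq> {zero_section} \<longrightarrow> N \<inter> K \<noteq> {zero_section})"

definition fibre_closure ::
  "('x \<Rightarrow> 'i vec set) \<Rightarrow> ('x \<Rightarrow> 'i vec \<Rightarrow> 'i vec \<Rightarrow> complex) \<Rightarrow> ('x \<Rightarrow> 'i vec) set \<Rightarrow> 'x \<Rightarrow> 'i vec set" where
  "fibre_closure H ip N x = {v\<in>H x. \<forall>e>0. \<exists>n\<in>N. hnorm (ip x) (vsub v (n x)) < e}"

definition nowhere_dense_in :: "'x topology \<Rightarrow> 'x set \<Rightarrow> bool" where
  "nowhere_dense_in X Y \<longleftrightarrow> X interior_of (X closure_of Y) = {}"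

end

theory Submission
  imports Defs
begin

text \<open>If \<open>Y\<^sub>m\<close> is dense in a nonempty open set \<open>W\<close>, cut \<open>m\<close> down by a
  Urysohn function supported in a compact subset of \<open>W\<close>; the continuous multiples of
  the result form a nonzero submodule, and a nonzero element of \<open>N\<close> among them would be
  a nonzero multiple of \<open>m\<close> at some point of \<open>Y\<^sub>m\<close>, which is impossible.
  Conversely, a nonzero \<open>k\<close> in a submodule \<open>K\<close> is nonzero at some \<open>x\<^sub>0\<close>
  outside the closure of \<open>Y\<^sub>k\<close>. For a Urysohn function \<open>f\<close> at \<open>x\<^sub>0\<close> supported
  away from \<open>Y\<^sub>k\<close>, a partition of unity glues local approximations of \<open>k\<close> by
  elements of \<open>N\<close> into uniform approximations of \<open>f k\<close>; as \<open>N\<close> is closed,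
  \<open>f k\<close> is a nonzero element of \<open>N \<inter> K\<close>.\<close>

lemma vsub_eq_vadd_vsmul: "vsub u v = vadd u (vsmul (-1) v)"
  by (simp add: vsub_def vadd_def vsmul_def)

lemma vsmul_0_left [simp]: "vsmul 0 v = vzero"
  by (simp add: vsmul_def vzero_def)

lemma vsmul_vzero [simp]: "vsmul c vzero = vzero"
  by (simp add: vsmul_def vzero_def)

lemma vsmul_1 [simp]: "vsmul 1 v = v"
  by (simp add: vsmul_def)

lemma vsmul_vsmul [simp]: "vsmul a (vsmul c v) = vsmul (a * c) v"
  by (simp add: vsmul_def mult.assoc)

lemma vsub_self [simp]: "vsub v v = vzero"
  by (simp add: vsub_def vzero_def)

lemma vsub_vsmul_vsmul: "vsub (vsmul a v) (vsmul c v) = vsmul (a - c) v"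
  by (simp add: vsub_def vsmul_def fun_eq_iff algebra_simps)

lemma vsub_commute: "vsub u v = vsmul (-1) (vsub v u)"
  by (simp add: vsub_def vsmul_def)

lemma vsmul_eq_vzero_iff: "vsmul c v = vzero \<longleftrightarrow> c = 0 \<or> v = vzero"
  by (auto simp: vsmul_def vzero_def fun_eq_iff)

lemma ract_neq_zero_section: "s x \<noteq> vzero \<Longrightarrow> a x \<noteq> 0 \<Longrightarrow> ract s a \<noteq> zero_section"
  by (metis ract_def zero_section_def vsmul_eq_vzero_iff)

locale hilbert_space =
  fixes V :: "'i vec set" and ip :: "'i vec \<Rightarrow> 'i vec \<Rightarrow> complex"
  assumes complex_hilbert_space: "complex_hilbert_space V ip"
begin

lemma vzero_mem: "vzero \<in> V"
  and vadd_mem: "u \<in> V \<Longrightarrow> v \<in> V \<Longrightarrow> vadd u v \<in> V"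
  and vsmul_mem: "v \<in> V \<Longrightarrow> vsmul c v \<in> V"
  and ip_vadd_left: "u \<in> V \<Longrightarrow> v \<in> V \<Longrightarrow> w \<in> V \<Longrightarrow> ip (vadd u v) w = ip u w + ip v w"
  and ip_vsmul_left: "u \<in> V \<Longrightarrow> w \<in> V \<Longrightarrow> ip (vsmul c u) w = c * ip u w"
  and ip_commute: "u \<in> V \<Longrightarrow> v \<in> V \<Longrightarrow> ip v u = cnj (ip u v)"
  and Re_ip_self_nonneg: "u \<in> V \<Longrightarrow> 0 \<le> Re (ip u u)"
  and ip_self_eq_0: "u \<in> V \<Longrightarrow> ip u u = 0 \<Longrightarrow> u = vzero"
  using complex_hilbert_space unfolding complex_hilbert_space_def by blast+

lemma vsub_mem: "u \<in> V \<Longrightarrow> v \<in> V \<Longrightarrow> vsub u v \<in> V"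
  by (simp add: vsub_eq_vadd_vsmul vadd_mem vsmul_mem)

lemma ip_vadd_right:
  assumes "u \<in> V" "v \<in> V" "w \<in> V"
  shows "ip w (vadd u v) = ip w u + ip w v"
proof -
  have "ip w (vadd u v) = cnj (ip (vadd u v) w)"
    by (rule ip_commute) (simp_all add: assms vadd_mem)
  also have "\<dots> = cnj (ip u w) + cnj (ip v w)"
    by (simp add: assms ip_vadd_left)
  also have "\<dots> = ip w u + ip w v"
    using ip_commute[of w u] ip_commute[of w v] by (simp add: assms)
  finally show ?thesis .
qed

lemma ip_vsmul_right:
  assumes "u \<in> V" "w \<in> V"
  shows "ip w (vsmul c u) = cnj c * ip w u"
proof -
  have "ip w (vsmul c u) = cnj (ip (vsmul c u) w)"
    by (rule ip_commute) (simp_all add: assms vsmul_mem)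
  also have "\<dots> = cnj c * ip w u"
    using ip_commute[of w u] by (simp add: assms ip_vsmul_left)
  finally show ?thesis .
qed

lemma Im_ip_self: "u \<in> V \<Longrightarrow> Im (ip u u) = 0"
  using ip_commute[of u u] by (simp add: complex_eq_iff)

lemma ip_self_eq_of_real: "u \<in> V \<Longrightarrow> ip u u = of_real (Re (ip u u))"
  by (simp add: complex_eq_iff Im_ip_self)

lemma ip_vzero_left: "w \<in> V \<Longrightarrow> ip vzero w = 0"
  using ip_vsmul_left[OF vzero_mem, of w 0] by simp

lemma ip_vzero_right: "w \<in> V \<Longrightarrow> ip w vzero = 0"
  using ip_commute[OF vzero_mem, of w] by (simp add: ip_vzero_left)

lemma hnorm_vzero [simp]: "hnorm ip vzero = 0"
  by (simp add: hnorm_def ip_vzero_left vzero_mem)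

lemma hnorm_nonneg: "v \<in> V \<Longrightarrow> 0 \<le> hnorm ip v"
  by (simp add: hnorm_def Re_ip_self_nonneg)

lemma hnorm_eq_0_iff: "v \<in> V \<Longrightarrow> hnorm ip v = 0 \<longleftrightarrow> v = vzero"
  using ip_self_eq_0[of v]
  by (auto simp: hnorm_def complex_eq_iff Im_ip_self ip_vzero_left vzero_mem)

lemma hnorm_pos_iff: "v \<in> V \<Longrightarrow> 0 < hnorm ip v \<longleftrightarrow> v \<noteq> vzero"
  using hnorm_eq_0_iff hnorm_nonneg by force

lemma hnorm_square: "v \<in> V \<Longrightarrow> (hnorm ip v)\<^sup>2 = Re (ip v v)"
  by (simp add: hnorm_def Re_ip_self_nonneg)

lemma hnorm_vsmul: "v \<in> V \<Longrightarrow> hnorm ip (vsmul c v) = cmod c * hnorm ip v"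
proof -
  assume v: "v \<in> V"
  have "ip (vsmul c v) (vsmul c v) = c * cnj c * ip v v"
    by (simp add: v ip_vsmul_left ip_vsmul_right vsmul_mem)
  also have "\<dots> = of_real ((cmod c)\<^sup>2 * Re (ip v v))"
    by (subst ip_self_eq_of_real[OF v]) (simp add: complex_norm_square[symmetric])
  finally show ?thesis
    by (simp add: hnorm_def real_sqrt_mult)
qed

lemma hnorm_vsub_commute:
  "u \<in> V \<Longrightarrow> v \<in> V \<Longrightarrow> hnorm ip (vsub u v) = hnorm ip (vsub v u)"
  by (simp add: vsub_commute[of u] hnorm_vsmul vsub_mem)

lemma ip_vadd_vsmul_self:
  assumes "u \<in> V" "v \<in> V"
  shows "ip (vadd u (vsmul s v)) (vadd u (vsmul s v))
           = ip u u + cnj s * ip u v + s * ip v u + s * cnj s * ip v v"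
  using assms
  by (simp add: ip_vadd_left ip_vadd_right ip_vsmul_left ip_vsmul_right vadd_mem vsmul_mem
      algebra_simps)

lemma Cauchy_Schwarz:
  assumes u: "u \<in> V" and v: "v \<in> V"
  shows "cmod (ip u v) \<le> hnorm ip u * hnorm ip v"
proof (cases "v = vzero")
  case True
  then show ?thesis by (simp add: u ip_vzero_right)
next
  case False
  define A B p where "A = Re (ip u u)" and "B = Re (ip v v)" and "p = ip u v"
  have "B \<noteq> 0"
    using False ip_self_eq_0[OF v] Im_ip_self[OF v] by (auto simp: B_def complex_eq_iff)
  then have B: "B > 0"
    using Re_ip_self_nonneg[OF v] by (simp add: B_def)
  have uu: "ip u u = of_real A" and vv: "ip v v = of_real B"
    using ip_self_eq_of_real[OF u] ip_self_eq_of_real[OF v] by (simp_all add: A_def B_def)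
  define s where "s = - p / of_real B"
  have "ip (vadd u (vsmul s v)) (vadd u (vsmul s v)) = of_real (A - (cmod p)\<^sup>2 / B)"
    unfolding ip_vadd_vsmul_self[OF u v] ip_commute[OF u v] uu vv p_def[symmetric]
    using B by (simp add: s_def complex_norm_square[symmetric] field_simps)
  then have "0 \<le> A - (cmod p)\<^sup>2 / B"
    using Re_ip_self_nonneg[OF vadd_mem[OF u vsmul_mem[OF v]], of s] by simp
  then have "(cmod p)\<^sup>2 \<le> A * B"
    using B by (simp add: field_simps)
  then have "cmod p \<le> sqrt (A * B)"
    by (rule real_le_rsqrt)
  then show ?thesis
    by (simp add: hnorm_def A_def B_def p_def real_sqrt_mult)
qed

lemma hnorm_triangle:
  assumes u: "u \<in> V" and v: "v \<in> V"
  shows "hnorm ip (vadd u v) \<le> hnorm ip u + hnorm ip v"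
proof -
  have "(hnorm ip (vadd u v))\<^sup>2 = Re (ip u u) + Re (ip v v) + 2 * Re (ip u v)"
    using ip_commute[OF u v]
    by (simp add: u v hnorm_square ip_vadd_left ip_vadd_right vadd_mem)
  also have "\<dots> \<le> (hnorm ip u)\<^sup>2 + (hnorm ip v)\<^sup>2 + 2 * (hnorm ip u * hnorm ip v)"
    using complex_Re_le_cmod[of "ip u v"] Cauchy_Schwarz[OF u v] by (simp add: u v hnorm_square)
  also have "\<dots> = (hnorm ip u + hnorm ip v)\<^sup>2"
    by (simp add: power2_sum)
  finally show ?thesis
    by (rule power2_le_imp_le) (simp add: u v hnorm_nonneg)
qed

lemma sum_mem:
  "finite P \<Longrightarrow> (\<And>x. x \<in> P \<Longrightarrow> w x \<in> V) \<Longrightarrow> (\<lambda>i. \<Sum>x\<in>P. w x i) \<in> V"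
proof (induction P rule: finite_induct)
  case empty
  then show ?case using vzero_mem by (simp add: vzero_def)
next
  case (insert x P)
  then show ?case using vadd_mem[of "w x" "\<lambda>i. \<Sum>x\<in>P. w x i"] by (simp add: vadd_def)
qed

lemma hnorm_sum_le:
  "finite P \<Longrightarrow> (\<And>x. x \<in> P \<Longrightarrow> w x \<in> V) \<Longrightarrow>
     hnorm ip (\<lambda>i. \<Sum>x\<in>P. w x i) \<le> (\<Sum>x\<in>P. hnorm ip (w x))"
proof (induction P rule: finite_induct)
  case empty
  then show ?case by (simp add: vzero_def[symmetric])
next
  case (insert x P)
  have "hnorm ip (\<lambda>i. \<Sum>x\<in>insert x P. w x i) = hnorm ip (vadd (w x) (\<lambda>i. \<Sum>x\<in>P. w x i))"
    using insert.hyps by (simp add: vadd_def)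
  also have "\<dots> \<le> hnorm ip (w x) + hnorm ip (\<lambda>i. \<Sum>x\<in>P. w x i)"
    using insert.prems by (intro hnorm_triangle sum_mem insert.hyps) auto
  finally show ?case
    using insert by simp
qed

lemma hnorm_convex_combination_le:
  assumes "finite P" and w: "\<And>x. x \<in> P \<Longrightarrow> w x \<in> V" and c: "\<And>x. x \<in> P \<Longrightarrow> 0 \<le> c x"
    and close: "\<And>x. x \<in> P \<Longrightarrow> c x \<noteq> 0 \<Longrightarrow> hnorm ip (w x) \<le> \<epsilon>"
  shows "hnorm ip (\<lambda>i. \<Sum>x\<in>P. of_real (c x) * w x i) \<le> (\<Sum>x\<in>P. c x) * \<epsilon>"
proof -
  have "hnorm ip (\<lambda>i. \<Sum>x\<in>P. vsmul (of_real (c x)) (w x) i)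
      \<le> (\<Sum>x\<in>P. hnorm ip (vsmul (of_real (c x)) (w x)))"
    by (intro hnorm_sum_le assms vsmul_mem w)
  also have "\<dots> \<le> (\<Sum>x\<in>P. c x * \<epsilon>)"
  proof (rule sum_mono)
    fix x assume x: "x \<in> P"
    show "hnorm ip (vsmul (of_real (c x)) (w x)) \<le> c x * \<epsilon>"
      using c[OF x] close[OF x] by (cases "c x = 0") (simp_all add: w x hnorm_vsmul)
  qed
  finally show ?thesis
    by (simp add: vsmul_def sum_distrib_right)
qed

lemma hnorm_convex_combination_vsub_le:
  assumes "finite P" and w: "\<And>x. x \<in> P \<Longrightarrow> w x \<in> V" and v: "v \<in> V"
    and c: "\<And>x. x \<in> P \<Longrightarrow> 0 \<le> c x"
    and close: "\<And>x. x \<in> P \<Longrightarrow> c x \<noteq> 0 \<Longrightarrow> hnorm ip (vsub (w x) v) \<le> \<epsilon>"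
  shows "hnorm ip (vsub (\<lambda>i. \<Sum>x\<in>P. of_real (c x) * w x i) (vsmul (of_real (\<Sum>x\<in>P. c x)) v))
           \<le> (\<Sum>x\<in>P. c x) * \<epsilon>"
proof -
  have "vsub (\<lambda>i. \<Sum>x\<in>P. of_real (c x) * w x i) (vsmul (of_real (\<Sum>x\<in>P. c x)) v)
      = (\<lambda>i. \<Sum>x\<in>P. of_real (c x) * vsub (w x) v i)"
    by (simp add: vsub_def vsmul_def right_diff_distrib sum_subtractf sum_distrib_right)
  then show ?thesis
    using hnorm_convex_combination_le[OF assms(1) vsub_mem[OF w v] c close] by simp
qed

end

lemma continuous_map_of_real:
  "continuous_map X euclideanreal f \<Longrightarrow>
     continuous_map X euclidean (\<lambda>x. of_real (f x) :: 'a::real_normed_algebra_1)"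
  by (simp add: continuous_map_atin tendsto_of_real)

lemma continuous_map_mult:
  fixes f g :: "'x \<Rightarrow> 'a::real_normed_algebra"
  shows "continuous_map X euclidean f \<Longrightarrow> continuous_map X euclidean g \<Longrightarrow>
     continuous_map X euclidean (\<lambda>x. f x * g x)"
  by (simp add: continuous_map_atin tendsto_mult)

definition cutoff_function :: "'x topology \<Rightarrow> 'x set \<Rightarrow> ('x \<Rightarrow> real) \<Rightarrow> bool" where
  "cutoff_function X C f \<longleftrightarrow> compactin X C \<and> continuous_map X euclideanreal f \<and>
     (\<forall>x\<in>topspace X. 0 \<le> f x \<and> f x \<le> 1) \<and> (\<forall>x\<in>topspace X. x \<notin> C \<longrightarrow> f x = 0)"

lemma
  assumes "cutoff_function X C f"
  shows cutoff_function_compactin: "compactin X C"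
    and cutoff_function_continuous: "continuous_map X euclideanreal f"
    and cutoff_function_nonneg: "x \<in> topspace X \<Longrightarrow> 0 \<le> f x"
    and cutoff_function_le_1: "x \<in> topspace X \<Longrightarrow> f x \<le> 1"
    and cutoff_function_vanishes: "x \<in> topspace X \<Longrightarrow> x \<notin> C \<Longrightarrow> f x = 0"
  using assms unfolding cutoff_function_def by blast+

lemma Urysohn_locally_compact_Hausdorff:
  assumes "locally_compact_space X" "Hausdorff_space X" "openin X W" "x0 \<in> W"
  obtains C f where "cutoff_function X C f" "f x0 = 1" "C \<subseteq> W"
proof -
  have "regular_space X"
    using assms locally_compact_Hausdorff_imp_regular_space by blast
  then have "neighbourhood_base_of (\<lambda>C. compactin X C \<and> closedin X C) X"
    using assms(1) locally_compact_regular_space_neighbourhood_base by blast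
  then obtain U C where UC: "openin X U" "compactin X C" "x0 \<in> U" "U \<subseteq> C" "C \<subseteq> W"
    using assms(3,4) unfolding neighbourhood_base_of by metis
  have "completely_regular_space X"
    using assms locally_compact_regular_imp_completely_regular_space by blast
  moreover have "x0 \<in> topspace X"
    using UC openin_subset by blast
  ultimately obtain f where f: "continuous_map X (subtopology euclidean {0..1::real}) f"
     "f ` (topspace X - U) \<subseteq> {0}" "f ` {x0} \<subseteq> {1}"
    using Urysohn_completely_regular_compact_closed[of 0 1 X "{x0}" "topspace X - U"] UC
    by (auto simp: disjnt_def)
  have "continuous_map X euclideanreal f" "\<forall>x\<in>topspace X. 0 \<le> f x \<and> f x \<le> 1"
    using f(1) by (auto simp: continuous_map_in_subtopology)
  moreover have "\<forall>x\<in>topspace X. x \<notin> C \<longrightarrow> f x = 0"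
    using f(2) UC(4) by auto
  ultimately have "cutoff_function X C f"
    using UC(2) by (simp add: cutoff_function_def)
  then show thesis
    using that f(3) UC(5) by simp
qed

lemma openin_subset_closure_of_Int_nonempty:
  "openin X S \<Longrightarrow> S \<subseteq> X closure_of Y \<Longrightarrow> S \<noteq> {} \<Longrightarrow> S \<inter> Y \<noteq> {}"
  by (metis Int_absorb2 openin_Int_closure_of_eq_empty)

lemma cutoff_function_in_closure_of:
  assumes "locally_compact_space X" "Hausdorff_space X" "\<not> nowhere_dense_in X Y"
  obtains x0 C f where "x0 \<in> Y" "cutoff_function X C f" "f x0 = 1" "C \<subseteq> X closure_of Y"
proof -
  define W where "W = X interior_of (X closure_of Y)"
  have "W \<noteq> {}"
    using assms(3) by (simp add: nowhere_dense_in_def W_def)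
  moreover have W_open: "openin X W" and W_closure: "W \<subseteq> X closure_of Y"
    by (simp_all add: W_def interior_of_subset)
  ultimately obtain x0 where x0: "x0 \<in> W" "x0 \<in> Y"
    using openin_subset_closure_of_Int_nonempty by blast
  obtain C f where "cutoff_function X C f" "f x0 = 1" "C \<subseteq> W"
    using Urysohn_locally_compact_Hausdorff[OF assms(1,2) W_open x0(1)] by blast
  then show thesis
    using that[of x0 C f] x0(2) W_closure by blast
qed

lemma cutoff_function_avoiding_nowhere_dense:
  assumes "locally_compact_space X" "Hausdorff_space X" "nowhere_dense_in X Y"
    and S: "openin X S" "S \<noteq> {}"
  obtains x0 C f where "x0 \<in> S" "cutoff_function X C f" "f x0 = 1" "C \<inter> Y = {}"
proof -
  have "\<not> S \<subseteq> X closure_of Y"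
    using interior_of_maximal[OF _ S(1)] assms(3) S(2) by (auto simp: nowhere_dense_in_def)
  then obtain x0 where x0: "x0 \<in> S" "x0 \<notin> X closure_of Y"
    by blast
  have "openin X (topspace X - X closure_of Y)" "x0 \<in> topspace X - X closure_of Y"
    using x0 openin_subset[OF S(1)] by (auto simp: openin_diff)
  then obtain C f where f: "cutoff_function X C f" "f x0 = 1" "C \<subseteq> topspace X - X closure_of Y"
    using Urysohn_locally_compact_Hausdorff[OF assms(1,2)] by blast
  moreover have "C \<inter> Y = {}"
    using f(3) closure_of_subset_Int[of X Y] by blast
  ultimately show thesis
    using that[of x0 C f] x0(1) by blast
qed

lemma compact_support_in_C0_functions:
  assumes f: "continuous_map X euclideanreal f" and C: "compactin X C"
    and vanishes: "\<And>x. x \<in> topspace X \<Longrightarrow> x \<notin> C \<Longrightarrow> f x = 0"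
  shows "(\<lambda>x. complex_of_real (f x)) \<in> C0_functions X"
proof -
  have "compactin X {x \<in> topspace X. e \<le> norm (complex_of_real (f x))}" if "e > 0" for e
  proof (rule closed_compactin[OF C])
    show "{x \<in> topspace X. e \<le> norm (complex_of_real (f x))} \<subseteq> C"
    proof (rule subsetI, rule ccontr)
      fix x assume "x \<in> {x \<in> topspace X. e \<le> norm (complex_of_real (f x))}" "x \<notin> C"
      then show False
        using vanishes[of x] that by simp
    qed
    have "closedin X {x \<in> topspace X. \<bar>f x\<bar> \<in> {e..}}"
      by (intro closedin_continuous_map_preimage[where Y=euclideanreal] continuous_map_real_abs f) simp
    then show "closedin X {x \<in> topspace X. e \<le> norm (complex_of_real (f x))}"
      by simp
  qed
  then show ?thesis
    by (simp add: C0_functions_def continuous_map_of_real f)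
qed

lemma Urysohn_cover_compactin:
  assumes "locally_compact_space X" "Hausdorff_space X" and C: "compactin X C"
    and U_open: "\<And>x. x \<in> C \<Longrightarrow> openin X (U x)" and U_mem: "\<And>x. x \<in> C \<Longrightarrow> x \<in> U x"
  obtains P K \<psi> where "finite P" "P \<subseteq> C"
    "\<And>x. x \<in> P \<Longrightarrow> cutoff_function X (K x) (\<psi> x)" "\<And>x. x \<in> P \<Longrightarrow> K x \<subseteq> U x"
    "\<And>y. y \<in> C \<Longrightarrow> \<exists>x\<in>P. 1/2 < \<psi> x y"
proof -
  have "\<exists>\<psi> K. cutoff_function X K \<psi> \<and> \<psi> x = 1 \<and> K \<subseteq> U x" if "x \<in> C" for x
    by (rule Urysohn_locally_compact_Hausdorff[OF assms(1,2) U_open[OF that] U_mem[OF that]]) blast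
  then obtain \<psi> K
    where \<psi>: "\<And>x. x \<in> C \<Longrightarrow> cutoff_function X (K x) (\<psi> x) \<and> \<psi> x x = 1 \<and> K x \<subseteq> U x"
    by metis
  define V where "V x = {y \<in> topspace X. \<psi> x y \<in> {1/2<..}}" for x
  have "openin X (V x)" if "x \<in> C" for x
    unfolding V_def using \<psi>[OF that]
    by (intro openin_continuous_map_preimage[where Y=euclideanreal] cutoff_function_continuous) auto
  moreover have "C \<subseteq> \<Union> (V ` C)"
    using \<psi> compactin_subset_topspace[OF C] by (auto simp: V_def)
  ultimately obtain F where "finite F" "F \<subseteq> V ` C" "C \<subseteq> \<Union> F"
    using C unfolding compactin_def by (metis (no_types, lifting) imageE)
  then obtain P where P: "finite P" "P \<subseteq> C" "C \<subseteq> \<Union> (V ` P)"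
    by (metis finite_subset_image)
  show thesis
  proof (rule that[of P K \<psi>, OF P(1,2)])
    show "cutoff_function X (K x) (\<psi> x)" "K x \<subseteq> U x" if "x \<in> P" for x
      using \<psi>[OF subsetD[OF P(2) that]] by simp_all
    show "\<exists>x\<in>P. 1/2 < \<psi> x y" if "y \<in> C" for y
      using P(3) that by (auto simp: V_def)
  qed
qed

lemma partition_of_unity_compactin:
  assumes "locally_compact_space X" "Hausdorff_space X" and C: "compactin X C"
    and U_open: "\<And>x. x \<in> C \<Longrightarrow> openin X (U x)" and U_mem: "\<And>x. x \<in> C \<Longrightarrow> x \<in> U x"
  obtains P \<phi> where "finite P" "P \<subseteq> C"
    "\<And>x. x \<in> P \<Longrightarrow> continuous_map X euclideanreal (\<phi> x)"
    "\<And>x y. x \<in> P \<Longrightarrow> y \<in> topspace X \<Longrightarrow> 0 \<le> \<phi> x y"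
    "\<And>x y. x \<in> P \<Longrightarrow> y \<in> topspace X \<Longrightarrow> y \<notin> U x \<Longrightarrow> \<phi> x y = 0"
    "\<And>y. y \<in> C \<Longrightarrow> (\<Sum>x\<in>P. \<phi> x y) = 1"
proof -
  obtain P K \<psi> where P: "finite P" "P \<subseteq> C"
    and \<psi>_cutoff: "\<And>x. x \<in> P \<Longrightarrow> cutoff_function X (K x) (\<psi> x)"
    and K_U: "\<And>x. x \<in> P \<Longrightarrow> K x \<subseteq> U x"
    and \<psi>_cover: "\<And>y. y \<in> C \<Longrightarrow> \<exists>x\<in>P. 1/2 < \<psi> x y"
    using Urysohn_cover_compactin[OF assms] by blast
  have \<psi>_nonneg: "0 \<le> \<psi> x y" if "x \<in> P" "y \<in> topspace X" for x y
    using cutoff_function_nonneg[OF \<psi>_cutoff] that .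
  define S where "S y = (\<Sum>x\<in>P. \<psi> x y)" for y
  define D where "D y = max (S y) (1/2)" for y
  have D_pos: "0 < D y" for y
    by (simp add: D_def)
  have "continuous_map X euclideanreal S"
    unfolding S_def by (intro continuous_map_sum P(1) cutoff_function_continuous[OF \<psi>_cutoff])
  then have D_continuous: "continuous_map X euclideanreal D"
    unfolding D_def by (intro continuous_map_real_max continuous_map_canonical_const)
  show thesis
  proof (rule that[of P "\<lambda>x y. \<psi> x y / D y"])
    show "continuous_map X euclideanreal (\<lambda>y. \<psi> x y / D y)" if "x \<in> P" for x
      using D_pos
      by (intro continuous_map_real_divide cutoff_function_continuous[OF \<psi>_cutoff[OF that]]
          D_continuous) (metis less_irrefl)
    show "0 \<le> \<psi> x y / D y" if "x \<in> P" "y \<in> topspace X" for x y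
      using \<psi>_nonneg[OF that] D_pos[of y] by simp
    show "\<psi> x y / D y = 0" if "x \<in> P" "y \<in> topspace X" "y \<notin> U x" for x y
      using cutoff_function_vanishes[OF \<psi>_cutoff[OF that(1)] that(2)] K_U[OF that(1)] that(3)
      by auto
    show "(\<Sum>x\<in>P. \<psi> x y / D y) = 1" if y: "y \<in> C" for y
    proof -
      obtain x1 where "x1 \<in> P" "1/2 < \<psi> x1 y"
        using \<psi>_cover[OF y] by blast
      moreover have "\<psi> x1 y \<le> S y"
        unfolding S_def using \<open>x1 \<in> P\<close> \<psi>_nonneg y compactin_subset_topspace[OF C]
        by (intro member_le_sum P(1)) auto
      ultimately have "1/2 < S y"
        by linarith
      then show ?thesis
        by (simp add: D_def S_def flip: sum_divide_distrib)
    qed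
  qed (use P in simp_all)
qed

lemma
  assumes "submodule X H ip \<Gamma> K"
  shows submodule_subset_C0_sections: "K \<subseteq> C0_sections X H ip \<Gamma>"
    and submodule_zero_section: "zero_section \<in> K"
    and submodule_vadd: "s \<in> K \<Longrightarrow> t \<in> K \<Longrightarrow> (\<lambda>x. vadd (s x) (t x)) \<in> K"
    and submodule_vsmul: "s \<in> K \<Longrightarrow> (\<lambda>x. vsmul c (s x)) \<in> K"
    and submodule_ract: "s \<in> K \<Longrightarrow> a \<in> C0_functions X \<Longrightarrow> ract s a \<in> K"
  using assms unfolding submodule_def by blast+

lemma essential_submoduleD:
  "essential_submodule X H ip \<Gamma> N \<Longrightarrow> submodule X H ip \<Gamma> K \<Longrightarrow> K \<noteq> {zero_section} \<Longrightarrow>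
     N \<inter> K \<noteq> {zero_section}"
  by (simp add: essential_submodule_def)

locale hilbert_field =
  fixes X :: "'x topology" and H :: "'x \<Rightarrow> 'i vec set"
    and ip :: "'x \<Rightarrow> 'i vec \<Rightarrow> 'i vec \<Rightarrow> complex" and \<Gamma> :: "('x \<Rightarrow> 'i vec) set"
  assumes continuous_field: "continuous_field X H ip \<Gamma>"
begin

lemma hilbert_space_fibre: "x \<in> topspace X \<Longrightarrow> hilbert_space (H x) (ip x)"
  using continuous_field unfolding continuous_field_def hilbert_space_def by (elim conjE) blast

lemma section_is_section: "s \<in> \<Gamma> \<Longrightarrow> is_section X H s"
  using continuous_field unfolding continuous_field_def by (elim conjE) blast

lemma section_vadd: "s \<in> \<Gamma> \<Longrightarrow> t \<in> \<Gamma> \<Longrightarrow> (\<lambda>x. vadd (s x) (t x)) \<in> \<Gamma>"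
  using continuous_field unfolding continuous_field_def by (elim conjE) blast

lemma section_vsmul: "s \<in> \<Gamma> \<Longrightarrow> (\<lambda>x. vsmul c (s x)) \<in> \<Gamma>"
  using continuous_field unfolding continuous_field_def by (elim conjE) blast

lemma continuous_map_hnorm_section:
  "s \<in> \<Gamma> \<Longrightarrow> continuous_map X euclideanreal (\<lambda>x. hnorm (ip x) (s x))"
  using continuous_field unfolding continuous_field_def by (elim conjE) blast

lemma section_if_locally_approximable:
  assumes "is_section X H t"
    and "\<And>x e. x \<in> topspace X \<Longrightarrow> e > 0 \<Longrightarrow> \<exists>s\<in>\<Gamma>. \<exists>U. openin X U \<and> x \<in> U \<and>
           (\<forall>y\<in>U. hnorm (ip y) (vsub (t y) (s y)) \<le> e)"
  shows "t \<in> \<Gamma>"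
  using continuous_field assms unfolding continuous_field_def by (elim conjE) blast

lemma section_mem: "s \<in> \<Gamma> \<Longrightarrow> x \<in> topspace X \<Longrightarrow> s x \<in> H x"
  and section_outside: "s \<in> \<Gamma> \<Longrightarrow> x \<notin> topspace X \<Longrightarrow> s x = vzero"
  using section_is_section unfolding is_section_def by blast+

lemma section_vsub: "s \<in> \<Gamma> \<Longrightarrow> t \<in> \<Gamma> \<Longrightarrow> (\<lambda>x. vsub (s x) (t x)) \<in> \<Gamma>"
  unfolding vsub_eq_vadd_vsmul by (intro section_vadd section_vsmul)

lemma openin_section_support:
  assumes s: "s \<in> \<Gamma>"
  shows "openin X {x \<in> topspace X. s x \<noteq> vzero}"
proof -
  have "{x \<in> topspace X. s x \<noteq> vzero} = {x \<in> topspace X. hnorm (ip x) (s x) \<in> {0<..}}"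
    using hilbert_space.hnorm_pos_iff[OF hilbert_space_fibre section_mem[OF s]] by auto
  then show ?thesis
    using openin_continuous_map_preimage[OF continuous_map_hnorm_section[OF s], of "{0<..}"]
    by simp
qed

text \<open>Near \<open>x\<^sub>0\<close>, \<open>ract s b\<close> is uniformly approximated by the section
  \<open>b x\<^sub>0 \<cdot> s\<close>, since \<open>\<bar>b - b x\<^sub>0\<bar> \<cdot> \<parallel>s\<parallel>\<close> is continuous and vanishes at \<open>x\<^sub>0\<close>.\<close>
lemma section_ract:
  assumes s: "s \<in> \<Gamma>" and b: "continuous_map X euclidean b"
  shows "ract s b \<in> \<Gamma>"
proof (rule section_if_locally_approximable)
  show "is_section X H (ract s b)"
    unfolding is_section_def ract_def
    using section_mem[OF s] section_outside[OF s] hilbert_space.vsmul_mem[OF hilbert_space_fibre]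
    by simp
next
  fix x0 e assume x0: "x0 \<in> topspace X" and e: "(e::real) > 0"
  define g where "g y = cmod (b y - b x0) * hnorm (ip y) (s y)" for y
  have "continuous_map X euclideanreal g"
    unfolding g_def
    by (intro continuous_map_real_mult continuous_map_norm continuous_map_diff b
        continuous_map_hnorm_section[OF s] continuous_map_canonical_const)
  then have "openin X {y \<in> topspace X. g y \<in> {..<e}}"
    by (rule openin_continuous_map_preimage) simp
  moreover have "x0 \<in> {y \<in> topspace X. g y \<in> {..<e}}"
    using x0 e by (simp add: g_def)
  moreover have "hnorm (ip y) (vsub (ract s b y) (vsmul (b x0) (s y))) = g y"
    if "y \<in> topspace X" for y
    unfolding ract_def vsub_vsmul_vsmul g_def
    by (rule hilbert_space.hnorm_vsmul[OF hilbert_space_fibre[OF that] section_mem[OF s that]])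
  ultimately show "\<exists>s'\<in>\<Gamma>. \<exists>U. openin X U \<and> x0 \<in> U \<and>
      (\<forall>y\<in>U. hnorm (ip y) (vsub (ract s b y) (s' y)) \<le> e)"
    by (intro bexI[OF _ section_vsmul[OF s, of "b x0"]]
        exI[of _ "{y \<in> topspace X. g y \<in> {..<e}}"]) auto
qed

lemma C0_sections_if_compact_support:
  assumes s: "s \<in> \<Gamma>" and C: "compactin X C"
    and vanishes: "\<And>x. x \<in> topspace X \<Longrightarrow> x \<notin> C \<Longrightarrow> s x = vzero"
  shows "s \<in> C0_sections X H ip \<Gamma>"
proof -
  have "compactin X {x \<in> topspace X. e \<le> hnorm (ip x) (s x)}" if e: "e > 0" for e
  proof (rule closed_compactin[OF C])
    show "{x \<in> topspace X. e \<le> hnorm (ip x) (s x)} \<subseteq> C"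
    proof (rule subsetI, rule ccontr)
      fix x assume "x \<in> {x \<in> topspace X. e \<le> hnorm (ip x) (s x)}" "x \<notin> C"
      then show False
        using vanishes[of x] e hilbert_space.hnorm_vzero[OF hilbert_space_fibre, of x] by simp
    qed
    have "closedin X {x \<in> topspace X. hnorm (ip x) (s x) \<in> {e..}}"
      by (rule closedin_continuous_map_preimage[OF continuous_map_hnorm_section[OF s]]) simp
    then show "closedin X {x \<in> topspace X. e \<le> hnorm (ip x) (s x)}"
      by simp
  qed
  then show ?thesis
    using s by (simp add: C0_sections_def)
qed

lemma
  assumes s: "s \<in> \<Gamma>" and f: "cutoff_function X C f"
  shows cutoff_section_mem: "ract s (\<lambda>x. of_real (f x)) \<in> \<Gamma>"
    and cutoff_section_vanishes:
      "x \<in> topspace X \<Longrightarrow> x \<notin> C \<Longrightarrow> ract s (\<lambda>x. of_real (f x)) x = vzero"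
    and cutoff_section_C0: "ract s (\<lambda>x. of_real (f x)) \<in> C0_sections X H ip \<Gamma>"
proof -
  show \<Gamma>: "ract s (\<lambda>x. of_real (f x)) \<in> \<Gamma>"
    by (intro section_ract s continuous_map_of_real cutoff_function_continuous[OF f])
  show vanishes: "ract s (\<lambda>x. of_real (f x)) x = vzero" if "x \<in> topspace X" "x \<notin> C" for x
    using cutoff_function_vanishes[OF f that] by (simp add: ract_def)
  show "ract s (\<lambda>x. of_real (f x)) \<in> C0_sections X H ip \<Gamma>"
    by (rule C0_sections_if_compact_support[OF \<Gamma> cutoff_function_compactin[OF f] vanishes])
qed

definition section_multiples :: "('x \<Rightarrow> 'i vec) \<Rightarrow> ('x \<Rightarrow> 'i vec) set" where
  "section_multiples k = {ract k b | b. continuous_map X euclidean b}"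

lemma section_multiplesI:
  "continuous_map X euclidean b \<Longrightarrow> s = ract k b \<Longrightarrow> s \<in> section_multiples k"
  unfolding section_multiples_def by blast

lemma section_multiplesE:
  assumes "s \<in> section_multiples k"
  obtains b where "continuous_map X euclidean b" "s = ract k b"
  using assms unfolding section_multiples_def by blast

lemma self_mem_section_multiples: "k \<in> section_multiples k"
  by (rule section_multiplesI[of "\<lambda>x. 1"]) (simp_all add: ract_def)

lemma submodule_section_multiples:
  assumes k: "k \<in> \<Gamma>" and C: "compactin X C"
    and vanishes: "\<And>x. x \<in> topspace X \<Longrightarrow> x \<notin> C \<Longrightarrow> k x = vzero"
  shows "submodule X H ip \<Gamma> (section_multiples k)"
proof -
  have "s \<in> C0_sections X H ip \<Gamma>" if "s \<in> section_multiples k" for s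
  proof (rule section_multiplesE[OF that])
    fix b assume b: "continuous_map X euclidean b" and s: "s = ract k b"
    show ?thesis
      using vanishes unfolding s
      by (intro C0_sections_if_compact_support[OF section_ract[OF k b] C]) (simp add: ract_def)
  qed
  moreover have "zero_section \<in> section_multiples k"
    by (rule section_multiplesI[of "\<lambda>x. 0"]) (simp_all add: ract_def zero_section_def)
  moreover have "(\<lambda>x. vadd (s x) (t x)) \<in> section_multiples k"
    if "s \<in> section_multiples k" "t \<in> section_multiples k" for s t
  proof (rule section_multiplesE[OF that(1)], rule section_multiplesE[OF that(2)])
    fix b b' assume "continuous_map X euclidean b" "s = ract k b"
      and "continuous_map X euclidean b'" "t = ract k b'"
    then show ?thesis
      by (intro section_multiplesI[of "\<lambda>x. b x + b' x"] continuous_map_add)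
         (simp_all add: ract_def vadd_def vsmul_def fun_eq_iff distrib_right)
  qed
  moreover have "(\<lambda>x. vsmul c (s x)) \<in> section_multiples k" if "s \<in> section_multiples k" for c s
  proof (rule section_multiplesE[OF that])
    fix b assume "continuous_map X euclidean b" "s = ract k b"
    then show ?thesis
      by (intro section_multiplesI[of "\<lambda>x. c * b x"] continuous_map_mult
          continuous_map_canonical_const) (simp_all add: ract_def)
  qed
  moreover have "ract s a \<in> section_multiples k"
    if "s \<in> section_multiples k" "a \<in> C0_functions X" for s a
  proof (rule section_multiplesE[OF that(1)])
    fix b assume "continuous_map X euclidean b" "s = ract k b"
    moreover have "continuous_map X euclidean a"
      using that(2) by (simp add: C0_functions_def)
    ultimately show ?thesis
      by (intro section_multiplesI[of "\<lambda>x. a x * b x"] continuous_map_mult) (simp_all add: ract_def)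
  qed
  ultimately show ?thesis
    unfolding submodule_def by blast
qed

end

locale closed_submodule_of_field = hilbert_field X H ip \<Gamma>
  for X :: "'x topology" and H :: "'x \<Rightarrow> 'i vec set" and ip and \<Gamma> +
  fixes N :: "('x \<Rightarrow> 'i vec) set"
  assumes N_closed_submodule: "closed_submodule X H ip \<Gamma> N"
begin

lemma N_submodule: "submodule X H ip \<Gamma> N"
  using N_closed_submodule unfolding closed_submodule_def by (rule conjunct1)

lemma N_subset_sections: "n \<in> N \<Longrightarrow> n \<in> \<Gamma>"
  using submodule_subset_C0_sections[OF N_submodule] by (auto simp: C0_sections_def)

lemma mem_N_if_uniform_limit:
  assumes m: "m \<in> C0_sections X H ip \<Gamma>"
    and approx: "\<And>\<epsilon>. \<epsilon> > 0 \<Longrightarrow> \<exists>g\<in>N. \<forall>x\<in>topspace X. hnorm (ip x) (vsub (g x) (m x)) \<le> \<epsilon>"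
  shows "m \<in> N"
proof -
  have "\<forall>j. \<exists>g\<in>N. \<forall>x\<in>topspace X.
      hnorm (ip x) (vsub (g x) (m x)) \<le> inverse (real (Suc j))"
    using approx by simp
  then obtain g where g_N: "\<And>j. g j \<in> N"
    and g_close: "\<And>j x. x \<in> topspace X \<Longrightarrow>
      hnorm (ip x) (vsub (g j x) (m x)) \<le> inverse (real (Suc j))"
    by metis
  have "\<exists>k. \<forall>j\<ge>k. \<forall>x\<in>topspace X. hnorm (ip x) (vsub (g j x) (m x)) \<le> e" if e: "e > 0" for e
  proof -
    obtain k where k: "inverse (real (Suc k)) < e"
      using reals_Archimedean[OF e] by blast
    have "inverse (real (Suc j)) \<le> inverse (real (Suc k))" if "j \<ge> k" for j
      using that by (simp add: le_imp_inverse_le)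
    then show ?thesis
      using g_close k by (meson order.trans less_imp_le)
  qed
  then show ?thesis
    using N_closed_submodule g_N m unfolding closed_submodule_def by blast
qed

lemma section_mem_fibre_closure:
  assumes n: "n \<in> N" and x: "x \<in> topspace X"
  shows "n x \<in> fibre_closure H ip N x"
proof -
  have "hnorm (ip x) (vsub (n x) (n x)) < e" if "e > 0" for e
    using that by (simp add: hilbert_space.hnorm_vzero[OF hilbert_space_fibre[OF x]])
  then show ?thesis
    using n section_mem[OF N_subset_sections[OF n] x] unfolding fibre_closure_def by blast
qed

lemma fibre_closure_mem_if_multiple:
  assumes "n \<in> N" "z \<in> topspace X" "n z = vsmul a v" "a \<noteq> 0"
  shows "v \<in> fibre_closure H ip N z"
proof -
  have "v = vsmul (1 / a) (n z)"
    using assms(3,4) by simp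
  moreover have "(\<lambda>x. vsmul (1 / a) (n x)) z \<in> fibre_closure H ip N z"
    by (rule section_mem_fibre_closure[OF submodule_vsmul[OF N_submodule assms(1)] assms(2)])
  ultimately show ?thesis
    by simp
qed

lemma N_linear_combination:
  "finite P \<Longrightarrow> (\<And>x. x \<in> P \<Longrightarrow> n x \<in> N) \<Longrightarrow> (\<And>x. x \<in> P \<Longrightarrow> c x \<in> C0_functions X) \<Longrightarrow>
     (\<lambda>y i. \<Sum>x\<in>P. c x y * n x y i) \<in> N"
proof (induction P rule: finite_induct)
  case empty
  then show ?case
    using submodule_zero_section[OF N_submodule] by (simp add: zero_section_def vzero_def)
next
  case (insert x P)
  have "(\<lambda>y i. \<Sum>x\<in>insert x P. c x y * n x y i)
      = (\<lambda>y. vadd (ract (n x) (c x) y) (\<lambda>i. \<Sum>x\<in>P. c x y * n x y i))"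
    using insert.hyps by (simp add: vadd_def ract_def vsmul_def)
  then show ?case
    using insert by (simp add: submodule_vadd[OF N_submodule] submodule_ract[OF N_submodule])
qed

lemma local_approximations_in_N:
  assumes k: "k \<in> \<Gamma>" and C: "C \<subseteq> topspace X"
    and k_fibre: "\<And>x. x \<in> C \<Longrightarrow> k x \<in> fibre_closure H ip N x" and \<epsilon>: "\<epsilon> > 0"
  obtains n U where "\<And>x. x \<in> C \<Longrightarrow> n x \<in> N" "\<And>x. x \<in> C \<Longrightarrow> openin X (U x)"
    "\<And>x. x \<in> C \<Longrightarrow> x \<in> U x"
    "\<And>x y. x \<in> C \<Longrightarrow> y \<in> U x \<Longrightarrow> hnorm (ip y) (vsub (n x y) (k y)) < \<epsilon>"
proof -
  have "\<exists>n\<in>N. hnorm (ip x) (vsub (k x) (n x)) < \<epsilon>" if "x \<in> C" for x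
    using k_fibre[OF that] \<epsilon> unfolding fibre_closure_def by blast
  then obtain n where n_N: "\<And>x. x \<in> C \<Longrightarrow> n x \<in> N"
    and n_close: "\<And>x. x \<in> C \<Longrightarrow> hnorm (ip x) (vsub (k x) (n x x)) < \<epsilon>"
    by metis
  define U where "U x = {y \<in> topspace X. hnorm (ip y) (vsub (n x y) (k y)) \<in> {..<\<epsilon>}}" for x
  show thesis
  proof (rule that[of n U])
    show "openin X (U x)" if "x \<in> C" for x
      unfolding U_def
      by (rule openin_continuous_map_preimage[OF continuous_map_hnorm_section])
         (simp_all add: section_vsub N_subset_sections n_N that k)
    show "x \<in> U x" if "x \<in> C" for x
      using that n_close[OF that] C
        hilbert_space.hnorm_vsub_commute[OF hilbert_space_fibre section_mem[OF k]
          section_mem[OF N_subset_sections[OF n_N]]]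
      by (auto simp: U_def)
  qed (auto simp: U_def n_N)
qed

text \<open>The approximant is \<open>\<Sum>\<^sub>x f \<phi>\<^sub>x n\<^sub>x\<close>, where \<open>n\<^sub>x \<in> N\<close> is
  \<open>\<epsilon>\<close>-close to \<open>k\<close> on \<open>U\<^sub>x\<close> and \<open>\<phi>\<close> is a partition of unity on the
  support of \<open>f\<close> subordinate to the \<open>U\<^sub>x\<close>; its distance to \<open>f k\<close> is then
  a convex combination of distances below \<open>\<epsilon>\<close>.\<close>
lemma uniform_approximation_by_N:
  assumes "locally_compact_space X" "Hausdorff_space X"
    and k: "k \<in> \<Gamma>" and f: "cutoff_function X C f"
    and k_fibre: "\<And>x. x \<in> C \<Longrightarrow> k x \<in> fibre_closure H ip N x" and \<epsilon>: "\<epsilon> > 0"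
  shows "\<exists>g\<in>N. \<forall>y\<in>topspace X. hnorm (ip y) (vsub (g y) (ract k (\<lambda>x. of_real (f x)) y)) \<le> \<epsilon>"
proof -
  have C: "compactin X C"
    using f by (rule cutoff_function_compactin)
  obtain n U where n_N: "\<And>x. x \<in> C \<Longrightarrow> n x \<in> N" and U_open: "\<And>x. x \<in> C \<Longrightarrow> openin X (U x)"
    and U_mem: "\<And>x. x \<in> C \<Longrightarrow> x \<in> U x"
    and n_close: "\<And>x y. x \<in> C \<Longrightarrow> y \<in> U x \<Longrightarrow> hnorm (ip y) (vsub (n x y) (k y)) < \<epsilon>"
    using local_approximations_in_N[OF k compactin_subset_topspace[OF C] k_fibre \<epsilon>] by blast
  obtain P \<phi> where P: "finite P" "P \<subseteq> C"
    and \<phi>_continuous: "\<And>x. x \<in> P \<Longrightarrow> continuous_map X euclideanreal (\<phi> x)"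
    and \<phi>_nonneg: "\<And>x y. x \<in> P \<Longrightarrow> y \<in> topspace X \<Longrightarrow> 0 \<le> \<phi> x y"
    and \<phi>_U: "\<And>x y. x \<in> P \<Longrightarrow> y \<in> topspace X \<Longrightarrow> y \<notin> U x \<Longrightarrow> \<phi> x y = 0"
    and \<phi>_sum: "\<And>y. y \<in> C \<Longrightarrow> (\<Sum>x\<in>P. \<phi> x y) = 1"
    using partition_of_unity_compactin[OF assms(1,2) C U_open U_mem] by blast
  define c where "c x y = f y * \<phi> x y" for x y
  define g where "g = (\<lambda>y i. \<Sum>x\<in>P. of_real (c x y) * n x y i)"
  have "(\<lambda>y. of_real (c x y)) \<in> C0_functions X" if "x \<in> P" for x
    unfolding c_def
    by (rule compact_support_in_C0_functions[OF continuous_map_real_mult C])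
       (simp_all add: cutoff_function_continuous[OF f] \<phi>_continuous that
         cutoff_function_vanishes[OF f])
  then have "g \<in> N"
    unfolding g_def using P n_N by (intro N_linear_combination) auto
  moreover have "hnorm (ip y) (vsub (g y) (ract k (\<lambda>x. of_real (f x)) y)) \<le> \<epsilon>"
    if y: "y \<in> topspace X" for y
  proof -
    interpret Hy: hilbert_space "H y" "ip y"
      by (rule hilbert_space_fibre[OF y])
    have c_sum: "(\<Sum>x\<in>P. c x y) = f y"
      using \<phi>_sum[of y] cutoff_function_vanishes[OF f y]
      by (cases "y \<in> C") (simp_all add: c_def flip: sum_distrib_left)
    have "hnorm (ip y) (vsub (\<lambda>i. \<Sum>x\<in>P. of_real (c x y) * n x y i)
        (vsmul (of_real (\<Sum>x\<in>P. c x y)) (k y))) \<le> (\<Sum>x\<in>P. c x y) * \<epsilon>"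
    proof (rule Hy.hnorm_convex_combination_vsub_le[OF P(1) _ section_mem[OF k y]])
      fix x assume x: "x \<in> P"
      show "n x y \<in> H y"
        using x P(2) by (intro section_mem y N_subset_sections n_N) auto
      show "0 \<le> c x y"
        unfolding c_def using cutoff_function_nonneg[OF f y] \<phi>_nonneg[OF x y] by simp
      show "hnorm (ip y) (vsub (n x y) (k y)) \<le> \<epsilon>" if "c x y \<noteq> 0"
        using that \<phi>_U[OF x y] n_close[OF subsetD[OF P(2) x]] by (force simp: c_def)
    qed
    also have "\<dots> \<le> \<epsilon>"
      using c_sum cutoff_function_nonneg[OF f y] cutoff_function_le_1[OF f y] \<epsilon>
      by (simp add: mult_left_le_one_le)
    finally show ?thesis
      by (simp add: g_def ract_def c_sum)
  qed
  ultimately show ?thesis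
    by blast
qed

lemma cutoff_multiple_mem_N:
  assumes "locally_compact_space X" "Hausdorff_space X"
    and k: "k \<in> \<Gamma>" and f: "cutoff_function X C f"
    and k_fibre: "\<And>x. x \<in> C \<Longrightarrow> k x \<in> fibre_closure H ip N x"
  shows "ract k (\<lambda>x. of_real (f x)) \<in> N"
proof (rule mem_N_if_uniform_limit)
  show "ract k (\<lambda>x. of_real (f x)) \<in> C0_sections X H ip \<Gamma>"
    by (rule cutoff_section_C0[OF k f])
  show "\<exists>g\<in>N. \<forall>y\<in>topspace X. hnorm (ip y) (vsub (g y) (ract k (\<lambda>x. of_real (f x)) y)) \<le> \<epsilon>"
    if "\<epsilon> > 0" for \<epsilon>
    by (rule uniform_approximation_by_N[OF assms that])
qed

lemma essential_imp_nowhere_dense: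
  assumes "locally_compact_space X" "Hausdorff_space X"
    and essential: "essential_submodule X H ip \<Gamma> N" and m: "m \<in> C0_sections X H ip \<Gamma>"
  shows "nowhere_dense_in X {x \<in> topspace X. m x \<notin> fibre_closure H ip N x}"
    (is "nowhere_dense_in X ?Y")
proof (rule ccontr)
  assume "\<not> nowhere_dense_in X ?Y"
  then obtain x0 C f where x0: "x0 \<in> ?Y" and f: "cutoff_function X C f" "f x0 = 1"
    and C_closure: "C \<subseteq> X closure_of ?Y"
    using cutoff_function_in_closure_of[OF assms(1,2)] by blast
  have m_\<Gamma>: "m \<in> \<Gamma>"
    using m by (simp add: C0_sections_def)
  define k where "k = ract m (\<lambda>x. of_real (f x))"
  have "m x0 \<noteq> vzero"
    using section_mem_fibre_closure[OF submodule_zero_section[OF N_submodule], of x0] x0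
    by (auto simp: zero_section_def)
  then have "k \<noteq> zero_section"
    unfolding k_def by (rule ract_neq_zero_section) (simp add: f(2))
  then have "section_multiples k \<noteq> {zero_section}"
    using self_mem_section_multiples[of k] by blast
  moreover have multiples: "submodule X H ip \<Gamma> (section_multiples k)"
    unfolding k_def
    by (rule submodule_section_multiples[OF cutoff_section_mem[OF m_\<Gamma> f(1)]
          cutoff_function_compactin[OF f(1)] cutoff_section_vanishes[OF m_\<Gamma> f(1)]])
  ultimately have "N \<inter> section_multiples k \<noteq> {zero_section}"
    using essential_submoduleD[OF essential] by blast
  then obtain n where n: "n \<in> N" "n \<in> section_multiples k" "n \<noteq> zero_section"
    using submodule_zero_section[OF N_submodule] submodule_zero_section[OF multiples] by blast
  then obtain b where "n = ract k b"
    unfolding section_multiples_def by blast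
  then have n_eq: "n z = vsmul (b z * of_real (f z)) (m z)" for z
    by (simp add: k_def ract_def)
  define S where "S = {x \<in> topspace X. n x \<noteq> vzero}"
  have "S \<noteq> {}"
    using n(3) section_outside[OF N_subset_sections[OF n(1)]]
    by (auto simp: S_def zero_section_def fun_eq_iff)
  moreover have "S \<subseteq> X closure_of ?Y"
    using cutoff_function_vanishes[OF f(1)] C_closure by (force simp: S_def n_eq)
  ultimately obtain z where z: "z \<in> S" "z \<in> ?Y"
    using openin_subset_closure_of_Int_nonempty[OF openin_section_support] N_subset_sections[OF n(1)]
    unfolding S_def by blast
  then have "m z \<in> fibre_closure H ip N z"
    by (intro fibre_closure_mem_if_multiple[OF n(1) _ n_eq])
       (auto simp: S_def n_eq vsmul_eq_vzero_iff)
  then show False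
    using z(2) by simp
qed

lemma nowhere_dense_imp_essential:
  assumes "locally_compact_space X" "Hausdorff_space X"
    and nowhere_dense:
      "\<And>m. m \<in> C0_sections X H ip \<Gamma> \<Longrightarrow>
         nowhere_dense_in X {x \<in> topspace X. m x \<notin> fibre_closure H ip N x}"
  shows "essential_submodule X H ip \<Gamma> N"
  unfolding essential_submodule_def
proof (intro allI impI)
  fix K assume K: "submodule X H ip \<Gamma> K \<and> K \<noteq> {zero_section}"
  then obtain k where k: "k \<in> K" "k \<noteq> zero_section"
    using submodule_zero_section by blast
  have k_C0: "k \<in> C0_sections X H ip \<Gamma>"
    using k(1) K submodule_subset_C0_sections by blast
  then have k_\<Gamma>: "k \<in> \<Gamma>"
    by (simp add: C0_sections_def)
  define S where "S = {x \<in> topspace X. k x \<noteq> vzero}"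
  have "S \<noteq> {}"
    using k(2) section_outside[OF k_\<Gamma>] by (auto simp: S_def zero_section_def fun_eq_iff)
  then obtain x0 C f where x0: "x0 \<in> S" and f: "cutoff_function X C f" "f x0 = 1"
    and C_Y: "C \<inter> {x \<in> topspace X. k x \<notin> fibre_closure H ip N x} = {}"
    using cutoff_function_avoiding_nowhere_dense[OF assms(1,2) nowhere_dense[OF k_C0]
        openin_section_support[OF k_\<Gamma>]]
    unfolding S_def by blast
  have "k x \<in> fibre_closure H ip N x" if "x \<in> C" for x
    using that C_Y compactin_subset_topspace[OF cutoff_function_compactin[OF f(1)]] by blast
  then have "ract k (\<lambda>x. of_real (f x)) \<in> N"
    by (rule cutoff_multiple_mem_N[OF assms(1,2) k_\<Gamma> f(1)])
  moreover have "ract k (\<lambda>x. of_real (f x)) \<in> K"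
    using K k(1) compact_support_in_C0_functions[OF cutoff_function_continuous[OF f(1)]
        cutoff_function_compactin[OF f(1)] cutoff_function_vanishes[OF f(1)]]
    by (blast intro: submodule_ract)
  moreover have "ract k (\<lambda>x. of_real (f x)) \<noteq> zero_section"
    using x0(1) f(2) by (intro ract_neq_zero_section[of k x0]) (simp_all add: S_def)
  ultimately show "N \<inter> K \<noteq> {zero_section}"
    by blast
qed

end

theorem mainTheorem5:
  fixes X :: "'x topology"
    and H :: "'x \<Rightarrow> 'i vec set"
    and ip :: "'x \<Rightarrow> 'i vec \<Rightarrow> 'i vec \<Rightarrow> complex"
    and \<Gamma> :: "('x \<Rightarrow> 'i vec) set"
    and N :: "('x \<Rightarrow> 'i vec) set"
  assumes "locally_compact_space X"
    and "Hausdorff_space X"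
    and "continuous_field X H ip \<Gamma>"
    and "closed_submodule X H ip \<Gamma> N"
  shows "essential_submodule X H ip \<Gamma> N \<longleftrightarrow>
         (\<forall>m\<in>C0_sections X H ip \<Gamma>.
            nowhere_dense_in X {x\<in>topspace X. m x \<notin> fibre_closure H ip N x})"
proof -
  interpret closed_submodule_of_field X H ip \<Gamma> N
    using assms(3,4) by unfold_locales
  show ?thesis
    using essential_imp_nowhere_dense[OF assms(1,2)] nowhere_dense_imp_essential[OF assms(1,2)]
    by blast
qed

end
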